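(* Let $p,r,n$ be natural numbers with $p+r\le n$, put $X(q)=\binom{n-r}{p}_q\binom{n+1-p}{r}_q\in\mathbb{Z}[q]$, and define $w:\mathrm{Match}(\mathcal G_n)_{p,r}\to\frac12\mathbb{Z}$ by $w(P)=\frac{r+(n-r-p)(p+r)}{2}+\alpha(P)$. Then $w$ takes values in $\mathbb{Z}_{\ge0}$, $$X(q)=\sum_{P\in\mathrm{Match}(\mathcal G_n)_{p,r}}q^{w(P)},$$ and $X(-1)$ equals the number of fixed points of the reflection involution $\sigma$ on $\mathrm{Match}(\mathcal G_n)_{p,r}$. That is, $(\mathrm{Match}(\mathcal G_n)_{p,r},\sigma,X,w)$ exhibits Stembridge's $q=-1$ phenomenon.
   Context: $\mathcal G_n$ ($n\ge0$) is a row of $2n+1$ unit tiles $G_{-n},\dots,G_n$ left to right; $G_i$ has face weight $1$ if $i+n$ is even and $2$ otherwise. $P_{min}$ consists of the top and bottom edges of all weight-$1$ tiles. $\mathrm{Twist}(P)$ is the set of tiles inside cycles of $P\triangle P_{min}$; $y_i(P)$ is the number of twisted tiles of face weight $i$. $\mathrm{Match}(\mathcal G_n)_{p,r}=\{P: y_1(P)=n+1-r,\ y_2(P)=p\}$. Tile exponents $\alpha(G_i)=i/2$ if $G_i$ has face weight $1$ and $\alpha(G_i)=-i/2$ if weight $2$; $\alpha(P)=\sum_{G\in\mathrm{Twist}(P)}\alpha(G)$. $\sigma$ is the involution induced by reflecting $\mathcal G_n$ across its vertical axis of symmetry. Gaussian binomial $\binom nk_q=\frac{(n)_q!}{(k)_q!(n-k)_q!}$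 with $(n)_q=1+q+\dots+q^{n-1}$, $(n)_q!=\prod_{j\le n}(j)_q$. *)

theory Defs
  imports "HOL-Computational_Algebra.Polynomial"
begin

text \<open>The graph G_n: a 2 x (2n+2) ladder of lattice points (x,y), 0 <= x <= 2n+1, y in {0,1}.
  Tile G_i (i = -n..n) occupies columns c..c+1 with c = i+n.\<close>

type_synonym vert = "nat \<times> nat"
type_synonym edge = "vert set"

definition verts :: "nat \<Rightarrow> vert set" where
  "verts n = {0..2*n+1} \<times> {0..1}"

definition edges :: "nat \<Rightarrow> edge set" where
  "edges n = {{(x,y),(x+1,y)} | x y. x < 2*n+1 \<and> y \<le> 1}
           \<union> {{(x,0),(x,1)} | x. x \<le> 2*n+1}"

definition perfect_matching :: "nat \<Rightarrow> edge set \<Rightarrow> bool" where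
  "perfect_matching n P \<longleftrightarrow> P \<subseteq> edges n \<and> (\<forall>v\<in>verts n. \<exists>!e. e \<in> P \<and> v \<in> e)"

definition Matchings :: "nat \<Rightarrow> edge set set" where
  "Matchings n = {P. perfect_matching n P}"

definition tiles :: "nat \<Rightarrow> int set" where
  "tiles n = {-int n..int n}"

definition tile_col :: "nat \<Rightarrow> int \<Rightarrow> nat" where
  "tile_col n i = nat (i + int n)"

definition face_weight :: "nat \<Rightarrow> int \<Rightarrow> nat" where
  "face_weight n i = (if even (i + int n) then 1 else 2)"

definition tile_top :: "nat \<Rightarrow> int \<Rightarrow> edge" where
  "tile_top n i = {(tile_col n i, 1), (tile_col n i + 1, 1)}"

definition tile_bot :: "nat \<Rightarrow> int \<Rightarrow> edge" where
  "tile_bot n i = {(tile_col n i, 0), (tile_col n i + 1, 0)}"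

definition P_min :: "nat \<Rightarrow> edge set" where
  "P_min n = {tile_top n i | i. i \<in> tiles n \<and> face_weight n i = 1}
           \<union> {tile_bot n i | i. i \<in> tiles n \<and> face_weight n i = 1}"

definition symdiff :: "'a set \<Rightarrow> 'a set \<Rightarrow> 'a set" where
  "symdiff A B = (A - B) \<union> (B - A)"

text \<open>A tile lies inside the cycles of the edge set D (a disjoint union of cycles)
  iff a ray from its centre to the outer face crosses an odd number of edges of D.
  The vertical upward ray from the centre of tile i crosses exactly its top edge.\<close>

definition ray_crossed :: "nat \<Rightarrow> int \<Rightarrow> edge set" where
  "ray_crossed n i = {tile_top n i}"

definition inside_cycles :: "nat \<Rightarrow> edge set \<Rightarrow> int \<Rightarrow> bool" where
  "inside_cycles n D i \<longleftrightarrow> odd (card (ray_crossed n i \<inter> D))"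

definition Twist :: "nat \<Rightarrow> edge set \<Rightarrow> int set" where
  "Twist n P = {i \<in> tiles n. inside_cycles n (symdiff P (P_min n)) i}"

definition ycount :: "nat \<Rightarrow> nat \<Rightarrow> edge set \<Rightarrow> nat" where
  "ycount n j P = card {i \<in> Twist n P. face_weight n i = j}"

definition Match :: "nat \<Rightarrow> nat \<Rightarrow> nat \<Rightarrow> edge set set" where
  "Match n p r = {P \<in> Matchings n. ycount n 1 P = n + 1 - r \<and> ycount n 2 P = p}"

definition alpha_tile :: "nat \<Rightarrow> int \<Rightarrow> rat" where
  "alpha_tile n i = (if face_weight n i = 1 then of_int i / 2 else - of_int i / 2)"

definition alpha :: "nat \<Rightarrow> edge set \<Rightarrow> rat" where
  "alpha n P = (\<Sum>i\<in>Twist n P. alpha_tile n i)"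

definition wt :: "nat \<Rightarrow> nat \<Rightarrow> nat \<Rightarrow> edge set \<Rightarrow> rat" where
  "wt n p r P = (of_nat r + of_nat (n - r - p) * of_nat (p + r)) / 2 + alpha n P"

definition reflect_edge :: "nat \<Rightarrow> edge \<Rightarrow> edge" where
  "reflect_edge n e = (\<lambda>(x,y). (2*n+1-x, y)) ` e"

definition sigma :: "nat \<Rightarrow> edge set \<Rightarrow> edge set" where
  "sigma n P = reflect_edge n ` P"

definition qint :: "nat \<Rightarrow> int poly" where
  "qint j = (\<Sum>i<j. monom 1 i)"

definition qfact :: "nat \<Rightarrow> int poly" where
  "qfact n = (\<Prod>j\<in>{1..n}. qint j)"

definition qbinom :: "nat \<Rightarrow> nat \<Rightarrow> int poly" where
  "qbinom n k = qfact n div (qfact k * qfact (n - k))"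

end

theory Submission
  imports Defs
begin

text \<open>A perfect matching \<open>P\<close> of the ladder is determined by the set \<open>S\<close> of tiles covered by two
  horizontal edges, and these sets are exactly the independent sets of the path \<open>0, \<dots>, 2 n\<close>;
  \<open>P\<close> lies in \<open>Match n p r\<close> iff \<open>S\<close> has \<open>r\<close> even and \<open>p\<close> odd elements. The twisted tiles
  can be read off from \<open>S\<close>, and \<open>w(P) = \<Sum>c\<in>S'. c div 2 - (p + r choose 2)\<close> for the mirror
  image \<open>S'\<close> of \<open>S\<close> under \<open>c \<mapsto> 2 n - c\<close>. The generating function of independent sets by
  \<open>\<Sum> c div 2\<close> satisfies a two-step recursion in the length of the path, which is solved by
  products of Gaussian binomials; this gives \<open>X\<close>. Evaluated at \<open>q = -1\<close>, these products count
  the mirror-symmetric independent sets, which correspond to the \<open>\<sigma>\<close>-fixed matchings because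
  \<open>\<sigma>\<close> acts on \<open>S\<close> by the mirror map.\<close>

section \<open>Gaussian binomials\<close>

text \<open>\<open>qmultichoose N k\<close> enumerates the \<open>k\<close>-element multisets of \<open>{..<N}\<close> by their sum; the
  recursion distinguishes whether \<open>N - 1\<close> occurs.\<close>

fun qmultichoose :: "nat \<Rightarrow> nat \<Rightarrow> int poly" where
  "qmultichoose N 0 = 1"
| "qmultichoose 0 (Suc k) = 0"
| "qmultichoose (Suc N) (Suc k) = qmultichoose N (Suc k) + monom 1 N * qmultichoose (Suc N) k"

lemma qint_Suc: "qint (Suc j) = qint j + monom 1 j"
  by (simp add: qint_def)

lemma qint_add: "qint (a + b) = qint a + monom 1 a * qint b"
  by (induction b) (simp_all add: qint_def qint_Suc algebra_simps mult_monom)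

lemma qfact_Suc: "qfact (Suc n) = qfact n * qint (Suc n)"
  by (simp add: qfact_def)

lemma qint_nonzero: "j > 0 \<Longrightarrow> qint j \<noteq> 0"
proof -
  assume "j > 0"
  then have "coeff (qint j) 0 = 1" by (simp add: qint_def coeff_sum)
  then show ?thesis by auto
qed

lemma qfact_nonzero: "qfact n \<noteq> 0"
  by (induction n) (simp_all add: qfact_def qfact_Suc qint_nonzero)

lemma qmultichoose_0: "qmultichoose 0 k = of_bool (k = 0)"
  by (cases k) simp_all

lemma qmultichoose_one: "qmultichoose (Suc 0) k = 1"
  by (induction k) auto

lemma qmultichoose_qfact: "qmultichoose (Suc N) k * qfact k * qfact N = qfact (N + k)"
proof (induction k arbitrary: N)
  case 0
  then show ?case by (simp add: qfact_def)
next
  case (Suc k)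
  show ?case
  proof (induction N)
    case 0
    then show ?case by (simp add: qmultichoose_one qfact_def)
  next
    case (Suc N)
    have "qmultichoose (Suc (Suc N)) (Suc k) * qfact (Suc k) * qfact (Suc N)
        = qint (Suc N) * (qmultichoose (Suc N) (Suc k) * qfact (Suc k) * qfact N)
          + monom 1 (Suc N) * qint (Suc k)
              * (qmultichoose (Suc (Suc N)) k * qfact k * qfact (Suc N))"
      by (simp add: qfact_Suc algebra_simps)
    also have "\<dots> = qfact (N + Suc k) * (qint (Suc N) + monom 1 (Suc N) * qint (Suc k))"
      using Suc.IH \<open>\<And>N. _ = qfact (N + k)\<close>[of "Suc N"] by (simp add: algebra_simps)
    also have "\<dots> = qfact (Suc N + Suc k)"
      by (simp add: qint_add[symmetric] qfact_Suc)
    finally show ?case .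
  qed
qed

lemma qbinom_eq_qmultichoose: "qbinom (N + k) k = qmultichoose (Suc N) k"
proof -
  have "qbinom (N + k) k = qmultichoose (Suc N) k * (qfact k * qfact N) div (qfact k * qfact N)"
    unfolding qbinom_def by (simp add: qmultichoose_qfact[symmetric] mult.assoc)
  also have "\<dots> = qmultichoose (Suc N) k"
    by (simp add: qfact_nonzero)
  finally show ?thesis .
qed

lemma poly_qmultichoose_minus_one:
  "poly (qmultichoose N k) (-1) =
     (if even N \<and> odd k then 0 else poly (qmultichoose ((N + 1) div 2) (k div 2)) 1)"
proof (induction N k rule: qmultichoose.induct)
  case (1 N)
  then show ?case by simp
next
  case (2 k)
  then show ?case by (cases "even k") simp_all
next
  case (3 N k)
  have "poly (qmultichoose (Suc N) (Suc k)) (-1)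
      = poly (qmultichoose N (Suc k)) (-1) + (-1) ^ N * poly (qmultichoose (Suc N) k) (-1)"
    by (simp add: poly_monom)
  also have "\<dots> = (if even (Suc N) \<and> odd (Suc k) then 0
                   else poly (qmultichoose ((Suc N + 1) div 2) (Suc k div 2)) 1)"
    unfolding 3
    by (cases "even N"; cases "even k")
       (auto elim!: evenE oddE simp: poly_monom)
  finally show ?case .
qed

section \<open>Independent sets of a path\<close>

definition indep :: "nat set \<Rightarrow> bool" where
  "indep S \<longleftrightarrow> (\<forall>c\<in>S. Suc c \<notin> S)"

definition card_even :: "nat set \<Rightarrow> nat" where
  "card_even S = card {c \<in> S. even c}"

definition card_odd :: "nat set \<Rightarrow> nat" where
  "card_odd S = card {c \<in> S. odd c}"

definition indep_sets :: "nat \<Rightarrow> nat \<Rightarrow> nat \<Rightarrow> nat set set" where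
  "indep_sets L e d = {S. S \<subseteq> {..<L} \<and> indep S \<and> card_even S = e \<and> card_odd S = d}"

definition half_sum :: "nat set \<Rightarrow> nat" where
  "half_sum S = (\<Sum>c\<in>S. c div 2)"

definition indep_gf :: "nat \<Rightarrow> nat \<Rightarrow> nat \<Rightarrow> int poly" where
  "indep_gf L e d = (\<Sum>S\<in>indep_sets L e d. monom 1 (half_sum S))"

lemma finite_indep_sets: "finite (indep_sets L e d)"
  by (rule finite_subset[of _ "Pow {..<L}"]) (auto simp: indep_sets_def)

lemma indep_sets_finite: "S \<in> indep_sets L e d \<Longrightarrow> finite S"
  by (auto simp: indep_sets_def intro: finite_subset)

lemma card_eq_card_even_plus_odd: "finite S \<Longrightarrow> card S = card_even S + card_odd S"
  unfolding card_even_def card_odd_def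
  by (subst card_Un_disjoint[symmetric]) (auto intro: arg_cong[where f = card])

lemma card_even_odd_insert:
  assumes "finite T" "x \<notin> T"
  shows "card_even (insert x T) = card_even T + of_bool (even x)"
    and "card_odd (insert x T) = card_odd T + of_bool (odd x)"
proof -
  have "{c \<in> insert x T. even c} = (if even x then insert x {c \<in> T. even c} else {c \<in> T. even c})"
       "{c \<in> insert x T. odd c} = (if odd x then insert x {c \<in> T. odd c} else {c \<in> T. odd c})"
    by auto
  with assms show "card_even (insert x T) = card_even T + of_bool (even x)"
    and "card_odd (insert x T) = card_odd T + of_bool (odd x)"
    by (simp_all add: card_even_def card_odd_def)
qed

lemma card_even_odd_Un:
  assumes "finite A" "finite B" "A \<inter> B = {}"
  shows "card_even (A \<union> B) = card_even A + card_even B"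
    and "card_odd (A \<union> B) = card_odd A + card_odd B"
proof -
  have "{c \<in> A \<union> B. even c} = {c \<in> A. even c} \<union> {c \<in> B. even c}"
       "{c \<in> A \<union> B. odd c} = {c \<in> A. odd c} \<union> {c \<in> B. odd c}"
    by auto
  with assms show "card_even (A \<union> B) = card_even A + card_even B"
    and "card_odd (A \<union> B) = card_odd A + card_odd B"
    by (simp_all add: card_even_def card_odd_def card_Un_disjoint disjoint_iff)
qed

lemma indep_sets_Suc_Suc_top:
  fixes L :: nat
  defines "a \<equiv> of_bool (even (Suc L)) :: nat" and "b \<equiv> of_bool (odd (Suc L)) :: nat"
  shows "{S \<in> indep_sets (Suc (Suc L)) e d. Suc L \<in> S} =
           (if a \<le> e \<and> b \<le> d then insert (Suc L) ` indep_sets L (e - a) (d - b) else {})"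
    (is "?A = ?B")
proof
  show "?A \<subseteq> ?B"
  proof
    fix S assume S: "S \<in> ?A"
    let ?T = "S - {Suc L}"
    have "L \<notin> S" using S by (auto simp: indep_sets_def indep_def)
    with S have T: "?T \<subseteq> {..<L}" "indep ?T"
      by (auto simp: indep_sets_def indep_def less_Suc_eq)
    have fin: "finite ?T" using T(1) by (rule finite_subset) simp
    have S_eq: "insert (Suc L) ?T = S" using S by auto
    have "card_even S = card_even ?T + a" "card_odd S = card_odd ?T + b"
      using card_even_odd_insert[OF fin, of "Suc L"] unfolding S_eq a_def b_def by simp_all
    with S T have "?T \<in> indep_sets L (e - a) (d - b)" "a \<le> e" "b \<le> d"
      by (auto simp: indep_sets_def)
    then show "S \<in> ?B"
      using S_eq by (auto intro: image_eqI[of S _ ?T])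
  qed
next
  show "?B \<subseteq> ?A"
  proof
    fix S assume "S \<in> ?B"
    then obtain T where T: "T \<in> indep_sets L (e - a) (d - b)" "a \<le> e" "b \<le> d"
      and S: "S = insert (Suc L) T"
      by (auto split: if_splits)
    have "finite T" "Suc L \<notin> T" using T by (auto simp: indep_sets_def intro: finite_subset)
    then have "card_even S = card_even T + a" "card_odd S = card_odd T + b"
      using card_even_odd_insert S unfolding a_def b_def by auto
    moreover have "S \<subseteq> {..<Suc (Suc L)}" "indep S"
      using T S by (auto simp: indep_sets_def indep_def)
    ultimately show "S \<in> ?A" using T S by (auto simp: indep_sets_def)
  qed
qed

lemma inj_on_insert_indep_sets: "inj_on (insert (Suc L)) (indep_sets L e d)"
proof (rule inj_onI)
  fix T U assume "T \<in> indep_sets L e d" "U \<in> indep_sets L e d" "insert (Suc L) T = insert (Suc L) U"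
  moreover from calculation have "Suc L \<notin> T" "Suc L \<notin> U" by (auto simp: indep_sets_def)
  ultimately show "T = U" by (simp add: insert_ident)
qed

lemma half_sum_insert_indep_sets:
  assumes "T \<in> indep_sets L e d"
  shows "half_sum (insert (Suc L) T) = Suc L div 2 + half_sum T"
proof -
  have "finite T" "Suc L \<notin> T" using assms by (auto simp: indep_sets_def intro: finite_subset)
  then show ?thesis by (simp add: half_sum_def)
qed

lemma indep_gf_Suc_Suc:
  fixes L :: nat
  defines "a \<equiv> of_bool (even (Suc L)) :: nat" and "b \<equiv> of_bool (odd (Suc L)) :: nat"
  shows "indep_gf (Suc (Suc L)) e d = indep_gf (Suc L) e d +
           (if a \<le> e \<and> b \<le> d then monom 1 (Suc L div 2) * indep_gf L (e - a) (d - b) else 0)"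
proof -
  let ?top = "{S \<in> indep_sets (Suc (Suc L)) e d. Suc L \<in> S}"
  have split: "indep_sets (Suc (Suc L)) e d = indep_sets (Suc L) e d \<union> ?top"
    and disj: "indep_sets (Suc L) e d \<inter> ?top = {}"
    by (auto simp: indep_sets_def less_Suc_eq)
  have "indep_gf (Suc (Suc L)) e d = indep_gf (Suc L) e d + (\<Sum>S\<in>?top. monom 1 (half_sum S))"
    unfolding indep_gf_def
    by (subst split, rule sum.union_disjoint) (use finite_indep_sets disj in auto)
  also have "(\<Sum>S\<in>?top. monom 1 (half_sum S)) =
      (if a \<le> e \<and> b \<le> d then monom 1 (Suc L div 2) * indep_gf L (e - a) (d - b) else 0)"
  proof (cases "a \<le> e \<and> b \<le> d")
    case True
    then have "(\<Sum>S\<in>?top. monom 1 (half_sum S)) =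
        (\<Sum>T\<in>indep_sets L (e - a) (d - b). monom 1 (half_sum (insert (Suc L) T)))"
      unfolding indep_sets_Suc_Suc_top[of L e d, folded a_def b_def]
      by (simp add: sum.reindex[OF inj_on_insert_indep_sets])
    also have "\<dots> = monom 1 (Suc L div 2) * indep_gf L (e - a) (d - b)"
      unfolding indep_gf_def sum_distrib_left
      by (intro sum.cong) (simp_all add: half_sum_insert_indep_sets mult_monom)
    finally show ?thesis using True by simp
  next
    case False
    then have "?top = {}"
      unfolding indep_sets_Suc_Suc_top[of L e d, folded a_def b_def] by (simp only: if_False)
    with False show ?thesis by (simp only: sum.empty if_False)
  qed
  finally show ?thesis .
qed

lemma indep_gf_0: "indep_gf 0 e d = (if e = 0 \<and> d = 0 then 1 else 0)"
proof -
  have "indep_sets 0 e d = (if e = 0 \<and> d = 0 then {{}} else {})"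
    by (auto simp: indep_sets_def indep_def card_even_def card_odd_def)
  then show ?thesis by (simp add: indep_gf_def half_sum_def)
qed

lemma indep_gf_1: "indep_gf (Suc 0) e d = (if d = 0 \<and> e \<le> 1 then 1 else 0)"
proof -
  have "{S. S \<subseteq> {..<Suc 0}} = {{}, {0}}" by auto
  then have "indep_sets (Suc 0) e d = {S \<in> {{}, {0}}. card_even S = e \<and> card_odd S = d}"
    by (auto simp: indep_sets_def indep_def)
  also have "\<dots> = (if d = 0 \<and> e = 0 then {{}} else if d = 0 \<and> e = 1 then {{0}} else {})"
  proof -
    have "{c::nat. c = 0 \<and> even c} = {0}" "{c::nat. c = 0 \<and> odd c} = {}" by (auto simp: odd_pos)
    then have "card_even {} = 0" "card_odd {} = 0" "card_even {0} = 1" "card_odd {0} = 0"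
      by (simp_all add: card_even_def card_odd_def)
    then show ?thesis by auto
  qed
  finally show ?thesis by (simp add: indep_gf_def half_sum_def)
qed

lemma Suc_choose_two: "Suc k choose 2 = (k choose 2) + k"
  by (simp add: numeral_2_eq_2)

text \<open>Shifting the \<open>i\<close>-th smallest element of an independent set \<open>S \<subseteq> {..<L}\<close> with \<open>k\<close>
  elements down by \<open>2 i\<close> is a parity-preserving bijection onto the pairs of multisets of even
  and of odd numbers in \<open>{0..L + 1 - 2 k}\<close>, and it lowers \<open>half_sum\<close> by \<open>k choose 2\<close>.\<close>

definition closed_gf :: "nat \<Rightarrow> nat \<Rightarrow> nat \<Rightarrow> int poly" where
  "closed_gf L e d =
     (if 2 * (e + d) \<le> L + 1
      then monom 1 ((e + d) choose 2) * qmultichoose ((L + 1 - 2 * (e + d)) div 2 + 1) e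
             * qmultichoose ((L + 2 - 2 * (e + d)) div 2) d
      else 0)"

lemma closed_gf_eqI:
  assumes "k = e + d" "L + 1 = 2 * k + m" "s = m div 2 + 1" "t = (m + 1) div 2"
  shows "closed_gf L e d = monom 1 (k choose 2) * qmultichoose s e * qmultichoose t d"
  using assms unfolding closed_gf_def by (simp add: Suc_diff_le)

lemma closed_gf_eq_0: "L + 1 < 2 * (e + d) \<Longrightarrow> closed_gf L e d = 0"
  unfolding closed_gf_def by simp

lemma closed_gf_even_col_0: "closed_gf (2 * j + 3) 0 d = closed_gf (2 * j + 2) 0 d"
proof -
  consider "d \<le> j + 1" | "d = j + 2" | "d > j + 2" by linarith
  then show ?thesis
  proof cases
    case 1
    define a where "a = j + 2 - d"
    with 1 have a: "j + 2 = a + d" "a \<ge> 1" by simp_all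
    have "closed_gf (2 * j + 3) 0 d
        = monom 1 (d choose 2) * qmultichoose (Suc a) 0 * qmultichoose a d"
      by (rule closed_gf_eqI[where m = "2 * a"]) (use a in simp_all)
    moreover have "closed_gf (2 * j + 2) 0 d
        = monom 1 (d choose 2) * qmultichoose a 0 * qmultichoose a d"
      by (rule closed_gf_eqI[where m = "2 * a - 1"]) (use a in simp_all)
    ultimately show ?thesis by simp
  next
    case 2
    have "closed_gf (2 * j + 3) 0 d = monom 1 (d choose 2) * qmultichoose 1 0 * qmultichoose 0 d"
      by (rule closed_gf_eqI[where m = 0]) (use 2 in simp_all)
    moreover have "closed_gf (2 * j + 2) 0 d = 0" by (rule closed_gf_eq_0) (use 2 in simp)
    ultimately show ?thesis using 2 by (simp add: qmultichoose_0)
  next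
    case 3
    then show ?thesis by (simp add: closed_gf_eq_0)
  qed
qed

lemma closed_gf_even_col_Suc:
  "closed_gf (2 * j + 3) (Suc e) d
     = closed_gf (2 * j + 2) (Suc e) d + monom 1 (Suc j) * closed_gf (2 * j + 1) e d"
proof -
  let ?k = "Suc e + d"
  consider "?k \<le> j + 1" | "?k = j + 2" | "?k > j + 2" by linarith
  then show ?thesis
  proof cases
    case 1
    define a where "a = j + 2 - ?k"
    with 1 have a: "j + 2 = a + ?k" "a \<ge> 1" by simp_all
    have "closed_gf (2 * j + 3) (Suc e) d
        = monom 1 (?k choose 2) * qmultichoose (Suc a) (Suc e) * qmultichoose a d"
      by (rule closed_gf_eqI[where m = "2 * a"]) (use a in simp_all)
    moreover have "closed_gf (2 * j + 2) (Suc e) d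
        = monom 1 (?k choose 2) * qmultichoose a (Suc e) * qmultichoose a d"
      by (rule closed_gf_eqI[where m = "2 * a - 1"]) (use a in simp_all)
    moreover have "closed_gf (2 * j + 1) e d
        = monom 1 ((e + d) choose 2) * qmultichoose (Suc a) e * qmultichoose a d"
      by (rule closed_gf_eqI[where m = "2 * a"]) (use a in simp_all)
    moreover have "monom (1::int) (Suc j) * monom 1 ((e + d) choose 2)
        = monom 1 (?k choose 2) * monom 1 a"
      using a by (simp add: mult_monom Suc_choose_two add_ac)
    ultimately show ?thesis by (simp add: algebra_simps)
  next
    case 2
    have "closed_gf (2 * j + 3) (Suc e) d
        = monom 1 (?k choose 2) * qmultichoose (Suc 0) (Suc e) * qmultichoose 0 d"
      by (rule closed_gf_eqI[where m = 0]) (use 2 in simp_all)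
    moreover have "closed_gf (2 * j + 2) (Suc e) d = 0" by (rule closed_gf_eq_0) (use 2 in simp)
    moreover have "closed_gf (2 * j + 1) e d
        = monom 1 ((e + d) choose 2) * qmultichoose (Suc 0) e * qmultichoose 0 d"
      by (rule closed_gf_eqI[where m = 0]) (use 2 in simp_all)
    moreover have "monom (1::int) (Suc j) * monom 1 ((e + d) choose 2) = monom 1 (?k choose 2)"
      using 2 by (simp add: mult_monom Suc_choose_two add_ac)
    ultimately show ?thesis by (simp add: qmultichoose_one mult.assoc[symmetric])
  next
    case 3
    then show ?thesis by (simp add: closed_gf_eq_0)
  qed
qed

lemma closed_gf_odd_col_0: "closed_gf (2 * j + 2) e 0 = closed_gf (2 * j + 1) e 0"
proof (cases "e \<le> j + 1")
  case True
  define a where "a = j + 1 - e"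
  with True have a: "j + 1 = a + e" by simp
  have "closed_gf (2 * j + 2) e 0
      = monom 1 (e choose 2) * qmultichoose (Suc a) e * qmultichoose (Suc a) 0"
    by (rule closed_gf_eqI[where m = "2 * a + 1"]) (use a in simp_all)
  moreover have "closed_gf (2 * j + 1) e 0
      = monom 1 (e choose 2) * qmultichoose (Suc a) e * qmultichoose a 0"
    by (rule closed_gf_eqI[where m = "2 * a"]) (use a in simp_all)
  ultimately show ?thesis by simp
next
  case False
  then show ?thesis by (simp add: closed_gf_eq_0)
qed

lemma closed_gf_odd_col_Suc:
  "closed_gf (2 * j + 2) e (Suc d)
     = closed_gf (2 * j + 1) e (Suc d) + monom 1 j * closed_gf (2 * j) e d"
proof (cases "e + Suc d \<le> j + 1")
  case True
  let ?k = "e + Suc d"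
  define a where "a = j + 1 - ?k"
  with True have a: "j + 1 = a + ?k" by simp
  have "closed_gf (2 * j + 2) e (Suc d)
      = monom 1 (?k choose 2) * qmultichoose (Suc a) e * qmultichoose (Suc a) (Suc d)"
    by (rule closed_gf_eqI[where m = "2 * a + 1"]) (use a in simp_all)
  moreover have "closed_gf (2 * j + 1) e (Suc d)
      = monom 1 (?k choose 2) * qmultichoose (Suc a) e * qmultichoose a (Suc d)"
    by (rule closed_gf_eqI[where m = "2 * a"]) (use a in simp_all)
  moreover have "closed_gf (2 * j) e d
      = monom 1 ((e + d) choose 2) * qmultichoose (Suc a) e * qmultichoose (Suc a) d"
    by (rule closed_gf_eqI[where m = "2 * a + 1"]) (use a in simp_all)
  moreover have "monom (1::int) j * monom 1 ((e + d) choose 2) = monom 1 (?k choose 2) * monom 1 a"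
    using a by (simp add: mult_monom Suc_choose_two add_ac)
  ultimately show ?thesis by (simp add: algebra_simps)
next
  case False
  then show ?thesis by (simp add: closed_gf_eq_0)
qed

lemma closed_gf_Suc_Suc:
  fixes L :: nat
  defines "a \<equiv> of_bool (even (Suc L)) :: nat" and "b \<equiv> of_bool (odd (Suc L)) :: nat"
  shows "closed_gf (Suc (Suc L)) e d = closed_gf (Suc L) e d +
           (if a \<le> e \<and> b \<le> d then monom 1 (Suc L div 2) * closed_gf L (e - a) (d - b) else 0)"
proof (cases "odd L")
  case True
  then obtain j where j: "L = 2 * j + 1" by (blast elim: oddE)
  then have "a = 1" "b = 0" by (simp_all add: a_def b_def)
  moreover have "Suc L div 2 = Suc j" using j by simp
  ultimately show ?thesis
    using j closed_gf_even_col_0[of j d] closed_gf_even_col_Suc[of j "e - 1" d]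
    by (cases e) (simp_all add: numeral_3_eq_3)
next
  case False
  then obtain j where j: "L = 2 * j" by (blast elim: evenE)
  then have "a = 0" "b = 1" by (simp_all add: a_def b_def)
  moreover have "Suc L div 2 = j" using j by simp
  ultimately show ?thesis
    using j closed_gf_odd_col_0[of j e] closed_gf_odd_col_Suc[of j e "d - 1"]
    by (cases d) simp_all
qed

lemma indep_gf_eq_closed_gf: "indep_gf L e d = closed_gf L e d"
proof (induction L arbitrary: e d rule: induct_nat_012)
  case 0
  then show ?case by (simp add: indep_gf_0 closed_gf_def binomial_eq_0)
next
  case 1
  then show ?case
    by (cases "e + d \<le> 1")
       (auto simp: indep_gf_1 closed_gf_def qmultichoose_one qmultichoose_0
          numeral_2_eq_2 le_Suc_eq)
next
  case (ge2 L)
  then show ?case by (simp only: indep_gf_Suc_Suc closed_gf_Suc_Suc)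
qed

lemma indep_card_bounds:
  assumes "S \<subseteq> {..<L}" "indep S"
  shows "2 * card S \<le> L + 1" "card S choose 2 \<le> half_sum S"
proof -
  have "2 * card S \<le> L + 1 \<and> card S choose 2 \<le> half_sum S"
    using assms
  proof (induction L arbitrary: S rule: less_induct)
    case (less L)
    show ?case
    proof (cases "L < 2")
      case True
      with less.prems have "S \<subseteq> {0}" by auto
      then have "S = {} \<or> S = {0}" by auto
      with True less.prems(1) show ?thesis by (auto simp: half_sum_def binomial_eq_0)
    next
      case False
      define L' where "L' = L - 2"
      with False have L': "L = Suc (Suc L')" by simp
      show ?thesis
      proof (cases "Suc L' \<in> S")
        case False
        with less.prems L' have "S \<subseteq> {..<Suc L'}" by (auto simp: less_Suc_eq)
        with less.IH[of "Suc L'" S] less.prems L' show ?thesis by simp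
      next
        case True
        let ?T = "S - {Suc L'}"
        have "L' \<notin> S" using True less.prems by (auto simp: indep_def)
        with less.prems L' have T: "?T \<subseteq> {..<L'}" "indep ?T" by (auto simp: indep_def less_Suc_eq)
        then have IH: "2 * card ?T \<le> L' + 1" "card ?T choose 2 \<le> half_sum ?T"
          using less.IH[of L' ?T] L' by simp_all
        have "finite S" using less.prems(1) by (rule finite_subset) simp
        then have "card S = Suc (card ?T)" "half_sum S = Suc L' div 2 + half_sum ?T"
          using card_Suc_Diff1[of S] True by (simp_all add: half_sum_def sum.remove)
        moreover have "card ?T \<le> Suc L' div 2" using IH(1) by linarith
        ultimately show ?thesis using IH L' by (simp add: Suc_choose_two)
      qed
    qed
  qed
  then show "2 * card S \<le> L + 1" "card S choose 2 \<le> half_sum S" by simp_all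
qed

lemma qbinom_product_eq_qmultichoose:
  assumes "p + r \<le> n"
  shows "qbinom (n - r) p * qbinom (n + 1 - p) r
           = qmultichoose (n + 1 - (p + r)) p * qmultichoose (n + 2 - (p + r)) r"
proof -
  have "qbinom (n - r) p = qmultichoose (n + 1 - (p + r)) p"
    using qbinom_eq_qmultichoose[of "n - r - p" p] assms by (simp add: Suc_diff_le add.commute)
  moreover have "qbinom (n + 1 - p) r = qmultichoose (n + 2 - (p + r)) r"
    using qbinom_eq_qmultichoose[of "n + 1 - p - r" r] assms by (simp add: Suc_diff_le)
  ultimately show ?thesis by simp
qed

lemma indep_gf_eq_qbinom_product:
  assumes "p + r \<le> n"
  shows "indep_gf (2 * n + 1) r p
      = monom 1 ((p + r) choose 2) * (qbinom (n - r) p * qbinom (n + 1 - p) r)"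
proof -
  have "indep_gf (2 * n + 1) r p
      = monom 1 ((p + r) choose 2) * qmultichoose (n + 2 - (p + r)) r
          * qmultichoose (n + 1 - (p + r)) p"
    unfolding indep_gf_eq_closed_gf
    by (rule closed_gf_eqI[where m = "2 * (n + 1 - (p + r))"]) (use assms in simp_all)
  then show ?thesis using qbinom_product_eq_qmultichoose[OF assms] by (simp add: algebra_simps)
qed

lemma sum_indep_sets_shifted_monom:
  assumes "p + r \<le> n"
  shows "(\<Sum>S\<in>indep_sets (2 * n + 1) r p. monom 1 (half_sum S - (p + r choose 2)))
           = qbinom (n - r) p * qbinom (n + 1 - p) r"
proof -
  have "p + r choose 2 \<le> half_sum S" if "S \<in> indep_sets (2 * n + 1) r p" for S
  proof -
    have "card S = p + r"
      using that card_eq_card_even_plus_odd[OF indep_sets_finite[OF that]]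
      by (auto simp: indep_sets_def)
    with that show ?thesis using indep_card_bounds(2)[of S] by (auto simp: indep_sets_def)
  qed
  then have "monom 1 (p + r choose 2)
        * (\<Sum>S\<in>indep_sets (2 * n + 1) r p. monom 1 (half_sum S - (p + r choose 2)))
      = indep_gf (2 * n + 1) r p"
    unfolding indep_gf_def sum_distrib_left by (intro sum.cong) (simp_all add: mult_monom)
  also have "\<dots> = monom 1 (p + r choose 2) * (qbinom (n - r) p * qbinom (n + 1 - p) r)"
    by (rule indep_gf_eq_qbinom_product[OF assms])
  finally show ?thesis by simp
qed

lemma card_indep_sets:
  assumes "L + 1 = 2 * (e + d) + m"
  shows "int (card (indep_sets L e d))
      = poly (qmultichoose (m div 2 + 1) e) 1 * poly (qmultichoose ((m + 1) div 2) d) 1"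
proof -
  have "int (card (indep_sets L e d)) = poly (indep_gf L e d) 1"
    by (simp add: indep_gf_def poly_sum poly_monom)
  also have "\<dots> = poly (monom 1 ((e + d) choose 2) * qmultichoose (m div 2 + 1) e
          * qmultichoose ((m + 1) div 2) d) 1"
    unfolding indep_gf_eq_closed_gf by (subst closed_gf_eqI[OF refl assms refl refl]) rule
  finally show ?thesis by (simp add: poly_monom)
qed

section \<open>Mirror-symmetric independent sets\<close>

definition mirror :: "nat \<Rightarrow> nat set \<Rightarrow> nat set" where
  "mirror n S = (\<lambda>c. 2 * n - c) ` S"

lemma mirror_mirror:
  assumes "S \<subseteq> {..2 * n}"
  shows "mirror n (mirror n S) = S"
proof -
  have "(\<lambda>c. 2 * n - (2 * n - c)) ` S = id ` S" by (rule image_cong) (use assms in auto)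
  then show ?thesis unfolding mirror_def image_image by simp
qed

lemma inj_on_mirror_map: "inj_on (\<lambda>c. 2 * n - c) {..2 * (n::nat)}"
  by (auto simp: inj_on_def)

lemma card_even_odd_mirror:
  assumes "S \<subseteq> {..2 * n}"
  shows "card_even (mirror n S) = card_even S" "card_odd (mirror n S) = card_odd S"
proof -
  have inj: "inj_on (\<lambda>c. 2 * n - c) A" if "A \<subseteq> S" for A
    using inj_on_subset[OF inj_on_mirror_map] that assms by blast
  have filter_image: "{x \<in> f ` S. P x} = f ` {c \<in> S. P (f c)}" for f :: "nat \<Rightarrow> nat" and P
    by auto
  have "even (2 * n - c) \<longleftrightarrow> even c" if "c \<in> S" for c
    using that assms by auto
  then have "{c \<in> mirror n S. even c} = (\<lambda>c. 2 * n - c) ` {c \<in> S. even c}"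
       "{c \<in> mirror n S. odd c} = (\<lambda>c. 2 * n - c) ` {c \<in> S. odd c}"
    unfolding mirror_def filter_image by auto
  then show "card_even (mirror n S) = card_even S" "card_odd (mirror n S) = card_odd S"
    unfolding card_even_def card_odd_def by (simp_all add: card_image inj)
qed

lemma mirror_indep_sets: "S \<in> indep_sets (2 * n + 1) e d \<Longrightarrow> mirror n S \<in> indep_sets (2 * n + 1) e d"
proof -
  assume S: "S \<in> indep_sets (2 * n + 1) e d"
  then have S_le: "S \<subseteq> {..2 * n}" by (auto simp: indep_sets_def)
  have "indep (mirror n S)"
    unfolding indep_def
  proof (intro ballI notI)
    fix c assume "c \<in> mirror n S" "Suc c \<in> mirror n S"
    then obtain a b where "a \<in> S" "b \<in> S" "c = 2 * n - a" "Suc c = 2 * n - b"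
      by (auto simp: mirror_def)
    with S_le have "a = Suc b" by auto
    with \<open>a \<in> S\<close> \<open>b \<in> S\<close> S show False by (auto simp: indep_sets_def indep_def)
  qed
  with S card_even_odd_mirror[OF S_le] show ?thesis
    by (auto simp: indep_sets_def mirror_def)
qed

definition sym_extend :: "nat \<Rightarrow> bool \<Rightarrow> nat set \<Rightarrow> nat set" where
  "sym_extend n c U = U \<union> mirror n U \<union> (if c then {n} else {})"

context
  fixes n :: nat and U :: "nat set"
  assumes U: "U \<subseteq> {..<n}"
begin

lemma mirror_below_centre: "mirror n U \<subseteq> {n<..2 * n}"
  using U by (auto simp: mirror_def)

lemma sym_extend_below_centre: "sym_extend n c U \<inter> {..<n} = U"
  using U mirror_below_centre by (auto simp: sym_extend_def)

lemma centre_in_sym_extend: "n \<in> sym_extend n c U \<longleftrightarrow> c"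
  using U mirror_below_centre by (auto simp: sym_extend_def)

lemma sym_extend_subset: "sym_extend n c U \<subseteq> {..<2 * n + 1}"
  using U mirror_below_centre by (auto simp: sym_extend_def)

lemma mirror_sym_extend: "mirror n (sym_extend n c U) = sym_extend n c U"
proof -
  have "mirror n (mirror n U) = U" using U by (intro mirror_mirror) auto
  moreover have "mirror n (A \<union> B) = mirror n A \<union> mirror n B" for A B
    by (simp add: mirror_def image_Un)
  moreover have "mirror n {} = {}" "mirror n {n} = {n}" by (simp_all add: mirror_def)
  ultimately show ?thesis by (auto simp: sym_extend_def)
qed

lemma card_even_odd_sym_extend:
  "card_even (sym_extend n c U) = 2 * card_even U + of_bool (c \<and> even n)"
  "card_odd (sym_extend n c U) = 2 * card_odd U + of_bool (c \<and> odd n)"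
proof -
  have fin: "finite U" "finite (mirror n U)" using U by (auto simp: mirror_def intro: finite_subset)
  have disj: "U \<inter> mirror n U = {}" using U mirror_below_centre by fastforce
  have n: "n \<notin> U \<union> mirror n U" using U mirror_below_centre by auto
  have "U \<subseteq> {..2 * n}" using U by auto
  then have "card_even (U \<union> mirror n U) = 2 * card_even U"
    "card_odd (U \<union> mirror n U) = 2 * card_odd U"
    using card_even_odd_Un[OF fin disj] card_even_odd_mirror[of U n] by simp_all
  then show "card_even (sym_extend n c U) = 2 * card_even U + of_bool (c \<and> even n)"
    "card_odd (sym_extend n c U) = 2 * card_odd U + of_bool (c \<and> odd n)"
    using card_even_odd_insert[of "U \<union> mirror n U" n] fin n by (auto simp: sym_extend_def)
qed

lemma indep_sym_extend:
  assumes indep: "indep U" and centre: "c \<Longrightarrow> U \<subseteq> {..<n - 1}"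
  shows "indep (sym_extend n c U)"
  unfolding indep_def
proof (intro ballI notI)
  fix x assume x: "x \<in> sym_extend n c U" and Suc_x: "Suc x \<in> sym_extend n c U"
  have mem: "y \<in> sym_extend n c U \<longleftrightarrow>
      (y < n \<and> y \<in> U) \<or> (n < y \<and> y \<le> 2 * n \<and> 2 * n - y \<in> U) \<or> (c \<and> y = n)" for y
    using U by (auto simp: sym_extend_def mirror_def image_iff intro!: bexI[of _ "2 * n - y"])
  have "x \<in> U \<Longrightarrow> Suc x \<notin> U" "2 * n - Suc x \<in> U \<Longrightarrow> x < 2 * n \<Longrightarrow> 2 * n - x \<notin> U"
    using indep Suc_diff_Suc[of x "2 * n"] by (auto simp: indep_def)
  moreover have "c \<Longrightarrow> x \<in> U \<Longrightarrow> Suc x \<noteq> n" "c \<Longrightarrow> 2 * n - Suc x \<in> U \<Longrightarrow> x \<noteq> n"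
    using centre by force+
  ultimately show False using x Suc_x
    unfolding mem by (elim disjE) simp_all
qed

end

lemma sym_extend_symmetric:
  assumes S: "S \<subseteq> {..2 * n}" and sym: "mirror n S = S"
  shows "sym_extend n (n \<in> S) (S \<inter> {..<n}) = S"
proof (intro equalityI subsetI)
  fix c assume "c \<in> sym_extend n (n \<in> S) (S \<inter> {..<n})"
  moreover have "mirror n (S \<inter> {..<n}) \<subseteq> S" using sym unfolding mirror_def by blast
  ultimately show "c \<in> S" by (auto simp: sym_extend_def split: if_splits)
next
  fix c assume c: "c \<in> S"
  show "c \<in> sym_extend n (n \<in> S) (S \<inter> {..<n})"
  proof (cases "n < c")
    case True
    have "2 * n - c \<in> S \<inter> {..<n}" using c S sym True unfolding mirror_def by auto
    moreover have "c = 2 * n - (2 * n - c)" using c S by auto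
    ultimately have "c \<in> mirror n (S \<inter> {..<n})" unfolding mirror_def by blast
    then show ?thesis by (simp add: sym_extend_def)
  next
    case False
    then have "c < n \<or> c = n" by auto
    with c show ?thesis by (auto simp: sym_extend_def)
  qed
qed

lemma symmetric_indep_sets_eq_image:
  fixes n r p :: nat and c :: bool
  defines "cond \<equiv> r = 2 * (r div 2) + of_bool (c \<and> even n)
                    \<and> p = 2 * (p div 2) + of_bool (c \<and> odd n)"
  shows "{S \<in> indep_sets (2 * n + 1) r p. mirror n S = S \<and> (n \<in> S \<longleftrightarrow> c)}
           = sym_extend n c ` {U \<in> indep_sets (n - of_bool c) (r div 2) (p div 2). cond}"
    (is "?A = sym_extend n c ` ?D")
proof (intro equalityI subsetI)
  fix S assume S: "S \<in> ?A"
  let ?U = "S \<inter> {..<n}"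
  have "S \<subseteq> {..2 * n}" "mirror n S = S" "(n \<in> S) = c"
    using S by (auto simp: indep_sets_def)
  then have S_eq: "sym_extend n c ?U = S"
    using sym_extend_symmetric[of S n] by simp
  have "x \<noteq> n - 1" if "c" "x \<in> ?U" for x
  proof
    assume "x = n - 1"
    with that have "Suc x = n" "x \<in> S" by auto
    with S \<open>c\<close> show False by (auto simp: indep_sets_def indep_def)
  qed
  then have "?U \<subseteq> {..<n - of_bool c}" by fastforce
  moreover have "indep ?U" using S by (auto simp: indep_sets_def indep_def)
  moreover have "r = 2 * card_even ?U + of_bool (c \<and> even n)"
    "p = 2 * card_odd ?U + of_bool (c \<and> odd n)"
    using S card_even_odd_sym_extend[of ?U n c] by (auto simp: S_eq indep_sets_def)
  then have "card_even ?U = r div 2" "card_odd ?U = p div 2" "cond"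
    by (auto simp: cond_def of_bool_def)
  ultimately have "?U \<in> ?D" by (auto simp: indep_sets_def)
  with S_eq show "S \<in> sym_extend n c ` ?D" by (auto intro: image_eqI[of S _ ?U])
next
  fix S assume "S \<in> sym_extend n c ` ?D"
  then obtain U where U: "U \<in> ?D" and S: "S = sym_extend n c U" by blast
  then have below: "U \<subseteq> {..<n}" by (auto simp: indep_sets_def)
  have "indep S"
    unfolding S using U by (intro indep_sym_extend[OF below]) (auto simp: indep_sets_def)
  with U S show "S \<in> ?A"
    using sym_extend_subset[OF below] mirror_sym_extend[OF below]
      centre_in_sym_extend[OF below] card_even_odd_sym_extend[OF below]
    by (auto simp: indep_sets_def cond_def)
qed

text \<open>A symmetric set has \<open>r div 2\<close> even and \<open>p div 2\<close> odd elements below the centre, and this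
  half lives in a path that is shorter by one exactly when the centre is used.\<close>

lemma card_symmetric_indep_sets:
  fixes n r p :: nat and c :: bool
  defines "cond \<equiv> r = 2 * (r div 2) + of_bool (c \<and> even n)
                    \<and> p = 2 * (p div 2) + of_bool (c \<and> odd n)"
    and "u \<equiv> n - (p + r)"
  assumes "p + r \<le> n"
  shows "int (card {S \<in> indep_sets (2 * n + 1) r p. mirror n S = S \<and> (n \<in> S \<longleftrightarrow> c)})
           = (if cond then poly (qmultichoose ((u + 1) div 2 + 1) (r div 2)) 1
                             * poly (qmultichoose ((u + 2) div 2) (p div 2)) 1
              else 0)"
proof (cases cond)
  case True
  then have "r + p = 2 * (r div 2 + p div 2) + of_bool c"
    unfolding cond_def by (cases c; cases "even n") auto
  then have L: "n - of_bool c + 1 = 2 * (r div 2 + p div 2) + (u + 1)"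
    using assms(3) unfolding u_def by (cases c) auto
  have "inj_on (sym_extend n c) (indep_sets (n - of_bool c) (r div 2) (p div 2))"
  proof (rule inj_onI)
    fix U V assume "U \<in> indep_sets (n - of_bool c) (r div 2) (p div 2)"
      "V \<in> indep_sets (n - of_bool c) (r div 2) (p div 2)" "sym_extend n c U = sym_extend n c V"
    moreover from calculation have "U \<subseteq> {..<n}" "V \<subseteq> {..<n}" by (auto simp: indep_sets_def)
    ultimately show "U = V" using sym_extend_below_centre by metis
  qed
  with True card_indep_sets[OF L] show ?thesis
    unfolding symmetric_indep_sets_eq_image[of n r p c, folded cond_def]
    by (simp add: card_image mult.commute)
next
  case False
  then show ?thesis
    unfolding symmetric_indep_sets_eq_image[of n r p c, folded cond_def] by simp
qed

lemma poly_qbinom_product_minus_one: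
  assumes "p + r \<le> n"
  shows "poly (qbinom (n - r) p * qbinom (n + 1 - p) r) (-1)
           = int (card {S \<in> indep_sets (2 * n + 1) r p. mirror n S = S})"
proof -
  define u where "u = n - (p + r)"
  have n: "n = u + p + r" using assms by (simp add: u_def)
  define G where "G = poly (qmultichoose ((u + 1) div 2 + 1) (r div 2)) 1
                        * poly (qmultichoose ((u + 2) div 2) (p div 2)) 1"
  define cond where "cond c \<longleftrightarrow> r = 2 * (r div 2) + of_bool (c \<and> even n)
                                  \<and> p = 2 * (p div 2) + of_bool (c \<and> odd n)" for c
  let ?sym = "\<lambda>c. {S \<in> indep_sets (2 * n + 1) r p. mirror n S = S \<and> (n \<in> S \<longleftrightarrow> c)}"
  have sym: "int (card (?sym c)) = (if cond c then G else 0)" for c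
    using card_symmetric_indep_sets[OF assms, of c] unfolding G_def cond_def u_def .
  have "{S \<in> indep_sets (2 * n + 1) r p. mirror n S = S} = ?sym True \<union> ?sym False"
    by auto
  then have "int (card {S \<in> indep_sets (2 * n + 1) r p. mirror n S = S})
      = int (card (?sym True)) + int (card (?sym False))"
    using finite_indep_sets by (simp add: card_Un_disjoint disjoint_iff)
  also have "\<dots> = (if odd u \<and> odd p \<or> even u \<and> odd r then 0 else G)"
  proof -
    have "cond True \<or> cond False \<longleftrightarrow> \<not> (odd u \<and> odd p \<or> even u \<and> odd r)"
      "\<not> (cond True \<and> cond False)"
      unfolding cond_def n by (cases "even u"; cases "even p"; cases "even r"; simp; presburger)+
    then show ?thesis unfolding sym by auto
  qed
  also have "\<dots> = poly (qmultichoose (u + 1) p) (-1) * poly (qmultichoose (u + 2) r) (-1)"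
    unfolding poly_qmultichoose_minus_one G_def by (cases "even u") (auto elim!: evenE oddE)
  also have "\<dots> = poly (qbinom (n - r) p * qbinom (n + 1 - p) r) (-1)"
    using qbinom_product_eq_qmultichoose[OF assms] by (simp add: n)
  finally show ?thesis ..
qed

section \<open>Perfect matchings of the ladder\<close>

definition hedge :: "nat \<Rightarrow> nat \<Rightarrow> edge" where
  "hedge x y = {(x, y), (x + 1, y)}"

definition vedge :: "nat \<Rightarrow> edge" where
  "vedge x = {(x, 0), (x, 1)}"

lemma mem_hedge: "(a, b) \<in> hedge x y \<longleftrightarrow> b = y \<and> (a = x \<or> a = Suc x)"
  by (auto simp: hedge_def)

lemma mem_vedge: "(a, b) \<in> vedge x \<longleftrightarrow> a = x \<and> b \<le> 1"
  by (auto simp: vedge_def le_Suc_eq)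

lemma hedge_eq_iff: "hedge a y = hedge b y' \<longleftrightarrow> a = b \<and> y = y'"
  by (auto simp: hedge_def doubleton_eq_iff)

lemma hedge_neq_vedge: "hedge a y \<noteq> vedge b"
  by (auto simp: hedge_def vedge_def doubleton_eq_iff)

lemma edges_eq: "edges n = {hedge x y | x y. x < 2 * n + 1 \<and> y \<le> 1} \<union> {vedge x | x. x \<le> 2 * n + 1}"
  unfolding edges_def hedge_def vedge_def by auto

lemma mem_verts: "(x, y) \<in> verts n \<longleftrightarrow> x \<le> 2 * n + 1 \<and> y \<le> 1"
  by (auto simp: verts_def)

text \<open>A perfect matching of the ladder is determined by the set \<open>hcols\<close> of tiles covered by two
  horizontal edges: every vertex column not touched by these tiles carries a vertical edge.\<close>

definition hcols :: "nat \<Rightarrow> edge set \<Rightarrow> nat set" where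
  "hcols n P = {c. c < 2 * n + 1 \<and> hedge c 1 \<in> P}"

definition vcols :: "nat \<Rightarrow> nat set \<Rightarrow> nat set" where
  "vcols n S = {x. x \<le> 2 * n + 1 \<and> x \<notin> S \<and> x \<notin> Suc ` S}"

definition matching_of :: "nat \<Rightarrow> nat set \<Rightarrow> edge set" where
  "matching_of n S = (\<lambda>c. hedge c 1) ` S \<union> (\<lambda>c. hedge c 0) ` S \<union> vedge ` vcols n S"

lemma hcols_subset: "hcols n P \<subseteq> {..<2 * n + 1}"
  by (auto simp: hcols_def)

context
  fixes n P assumes pm: "perfect_matching n P"
begin

lemma pm_unique: "v \<in> verts n \<Longrightarrow> e1 \<in> P \<Longrightarrow> e2 \<in> P \<Longrightarrow> v \<in> e1 \<Longrightarrow> v \<in> e2 \<Longrightarrow> e1 = e2"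
  using pm unfolding perfect_matching_def by blast

lemma pm_edge_cases:
  assumes "e \<in> P"
  shows "(\<exists>x y. x < 2 * n + 1 \<and> y \<le> 1 \<and> e = hedge x y) \<or> (\<exists>x. x \<le> 2 * n + 1 \<and> e = vedge x)"
proof -
  have "P \<subseteq> edges n" using pm by (simp add: perfect_matching_def)
  with assms show ?thesis unfolding edges_eq by blast
qed

lemma vertex_cover_cases:
  assumes "x \<le> 2 * n + 1" "y \<le> 1"
  obtains "x < 2 * n + 1" "hedge x y \<in> P" | "x \<ge> 1" "hedge (x - 1) y \<in> P" | "vedge x \<in> P"
proof -
  have "(x, y) \<in> verts n" using assms by (simp add: mem_verts)
  then obtain e where e: "e \<in> P" "(x, y) \<in> e" using pm unfolding perfect_matching_def by blast
  from pm_edge_cases[OF e(1)] show ?thesis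
  proof (elim disjE exE conjE)
    fix a b assume "a < 2 * n + 1" "e = hedge a b"
    with e that show ?thesis by (cases "x = a") (auto simp: mem_hedge)
  next
    fix a assume "e = vedge a"
    with e that show ?thesis by (auto simp: mem_vedge)
  qed
qed

text \<open>Induction on the column: the vertex \<open>(c, 1 - y)\<close> is covered neither by a vertical edge
  nor by a horizontal edge from column \<open>c - 1\<close>, whose partner would meet \<open>hedge c y\<close>.\<close>

lemma hedge_other_row: "c < 2 * n + 1 \<Longrightarrow> y \<le> 1 \<Longrightarrow> hedge c y \<in> P \<Longrightarrow> hedge c (1 - y) \<in> P"
proof (induction c arbitrary: y rule: less_induct)
  case (less c)
  have cy: "(c, y) \<in> verts n" "(c, y) \<in> hedge c y"
    using less.prems by (auto simp: mem_verts mem_hedge)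
  show ?case
  proof (rule vertex_cover_cases[of c "1 - y"])
    assume "c \<ge> 1" "hedge (c - 1) (1 - y) \<in> P"
    then have "hedge (c - 1) y \<in> P" "(c, y) \<in> hedge (c - 1) y"
      using less.IH[of "c - 1" "1 - y"] less.prems by (auto simp: mem_hedge)
    then have "hedge (c - 1) y = hedge c y" using pm_unique[OF cy(1) _ less.prems(3)] cy(2) by blast
    with \<open>c \<ge> 1\<close> show ?thesis by (simp add: hedge_eq_iff)
  next
    assume "vedge c \<in> P"
    moreover have "(c, y) \<in> vedge c" using less.prems by (simp add: mem_vedge)
    ultimately have "vedge c = hedge c y" using pm_unique[OF cy(1) _ less.prems(3)] cy(2) by blast
    then show ?thesis by (simp add: hedge_neq_vedge[symmetric])
  qed (use less.prems in auto)
qed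

lemma hedge_in_pm_iff: "c < 2 * n + 1 \<Longrightarrow> y \<le> 1 \<Longrightarrow> hedge c y \<in> P \<longleftrightarrow> c \<in> hcols n P"
  using hedge_other_row[of c 0] hedge_other_row[of c 1] by (auto simp: hcols_def le_Suc_eq)

lemma vedge_in_pm_iff: "x \<le> 2 * n + 1 \<Longrightarrow> vedge x \<in> P \<longleftrightarrow> x \<in> vcols n (hcols n P)"
proof
  assume x: "x \<le> 2 * n + 1" and e: "vedge x \<in> P"
  have v: "(x, 1) \<in> verts n" "(x, 1) \<in> vedge x" using x by (simp_all add: mem_verts mem_vedge)
  have "c \<notin> hcols n P" if "x = c \<or> x = Suc c" for c
  proof
    assume "c \<in> hcols n P"
    then have "hedge c 1 = vedge x"
      using pm_unique[OF v(1) _ e _ v(2), of "hedge c 1"] that by (auto simp: hcols_def mem_hedge)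
    then show False by (simp add: hedge_neq_vedge)
  qed
  with x show "x \<in> vcols n (hcols n P)" by (auto simp: vcols_def)
next
  assume x: "x \<le> 2 * n + 1" and vc: "x \<in> vcols n (hcols n P)"
  show "vedge x \<in> P"
  proof (rule vertex_cover_cases[of x 1])
    assume "x < 2 * n + 1" "hedge x 1 \<in> P"
    with vc show ?thesis by (simp add: vcols_def hcols_def)
  next
    assume "x \<ge> 1" "hedge (x - 1) 1 \<in> P"
    then have "x - 1 \<in> hcols n P" using x by (simp add: hcols_def)
    then have "Suc (x - 1) \<in> Suc ` hcols n P" by (rule imageI)
    with vc \<open>x \<ge> 1\<close> show ?thesis by (simp add: vcols_def)
  qed (use x in auto)
qed

lemma indep_hcols: "indep (hcols n P)"
  unfolding indep_def
proof (intro ballI notI)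
  fix c assume "c \<in> hcols n P" "Suc c \<in> hcols n P"
  moreover have "(Suc c, 1) \<in> hedge c 1" "(Suc c, 1) \<in> hedge (Suc c) 1" by (auto simp: mem_hedge)
  ultimately have "hedge c 1 = hedge (Suc c) 1"
    using pm_unique[of "(Suc c, 1)"] by (auto simp: hcols_def mem_verts)
  then show False by (simp add: hedge_eq_iff)
qed

lemma matching_of_hcols: "matching_of n (hcols n P) = P"
proof (intro equalityI subsetI)
  fix e assume "e \<in> matching_of n (hcols n P)"
  then show "e \<in> P"
    unfolding matching_of_def using hedge_in_pm_iff vedge_in_pm_iff hcols_subset[of n P]
    by (auto simp: vcols_def)
next
  fix e assume e: "e \<in> P"
  from pm_edge_cases[OF e] show "e \<in> matching_of n (hcols n P)"
  proof (elim disjE exE conjE)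
    fix x y assume "x < 2 * n + 1" "y \<le> 1" "e = hedge x y"
    with e hedge_in_pm_iff show ?thesis by (auto simp: matching_of_def le_Suc_eq)
  next
    fix x assume "x \<le> 2 * n + 1" "e = vedge x"
    with e vedge_in_pm_iff show ?thesis by (auto simp: matching_of_def)
  qed
qed

end

lemma matching_of_cover_cases:
  assumes "e \<in> matching_of n S" "(x, y) \<in> e"
  shows "(x \<in> S \<and> e = hedge x y) \<or> (x \<ge> 1 \<and> x - 1 \<in> S \<and> e = hedge (x - 1) y)
           \<or> (x \<in> vcols n S \<and> e = vedge x)"
  using assms unfolding matching_of_def by (auto simp: mem_hedge mem_vedge)

lemma perfect_matching_of:
  assumes S: "S \<subseteq> {..<2 * n + 1}" and indep: "indep S"
  shows "perfect_matching n (matching_of n S)"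
  unfolding perfect_matching_def
proof (intro conjI ballI)
  show "matching_of n S \<subseteq> edges n"
    unfolding matching_of_def edges_eq using S by (auto simp: vcols_def)
next
  fix v assume "v \<in> verts n"
  then obtain x y where v: "v = (x, y)" "x \<le> 2 * n + 1" "y \<le> 1" by (cases v) (auto simp: mem_verts)
  have row: "hedge c y \<in> matching_of n S" if "c \<in> S" for c
    using that v(3) by (auto simp: matching_of_def le_Suc_eq)
  have "\<exists>e. e \<in> matching_of n S \<and> v \<in> e"
  proof (cases "x \<in> S \<or> x \<in> Suc ` S")
    case True
    then obtain c where "c \<in> S" "x = c \<or> x = Suc c" by blast
    with row[of c] v(1) show ?thesis by (auto simp: mem_hedge)
  next
    case False
    with v have "vedge x \<in> matching_of n S" "v \<in> vedge x"
      by (auto simp: matching_of_def vcols_def mem_vedge)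
    then show ?thesis by blast
  qed
  moreover have "e1 = e2"
    if "e1 \<in> matching_of n S" "v \<in> e1" "e2 \<in> matching_of n S" "v \<in> e2" for e1 e2
  proof -
    have "x - 1 \<notin> S" if "x \<in> S" "x \<ge> 1" using that indep by (auto simp: indep_def)
    moreover have "x \<notin> S" "x - 1 \<notin> S" if "x \<in> vcols n S" "x \<ge> 1"
      using that by (auto simp: vcols_def image_iff)
    moreover have "x \<notin> S" if "x \<in> vcols n S" using that by (simp add: vcols_def)
    moreover have "(x \<in> S \<and> e = hedge x y) \<or> (x \<ge> 1 \<and> x - 1 \<in> S \<and> e = hedge (x - 1) y)
        \<or> (x \<in> vcols n S \<and> e = vedge x)" if "e \<in> matching_of n S" "v \<in> e" for e
      using matching_of_cover_cases[OF that(1)] that(2) v(1) by simp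
    note cases = this[OF that(1,2)] this[OF that(3,4)]
    ultimately show ?thesis
      using cases by (elim disjE conjE) simp_all
  qed
  ultimately show "\<exists>!e. e \<in> matching_of n S \<and> v \<in> e" by blast
qed

lemma hcols_matching_of: "S \<subseteq> {..<2 * n + 1} \<Longrightarrow> hcols n (matching_of n S) = S"
  unfolding hcols_def matching_of_def
  by (auto simp: hedge_eq_iff hedge_neq_vedge hedge_neq_vedge[symmetric])

lemma reflect_hedge: "c \<le> 2 * n \<Longrightarrow> reflect_edge n (hedge c y) = hedge (2 * n - c) y"
  unfolding reflect_edge_def hedge_def by (auto simp: Suc_diff_le)

lemma reflect_vedge: "reflect_edge n (vedge x) = vedge (2 * n + 1 - x)"
  unfolding reflect_edge_def vedge_def by auto

lemma vcols_mirror: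
  assumes S: "S \<subseteq> {..<2 * n + 1}"
  shows "vcols n (mirror n S) = (\<lambda>x. 2 * n + 1 - x) ` vcols n S"
proof -
  have mem_Suc_image: "y \<in> Suc ` A \<longleftrightarrow> 0 < y \<and> y - 1 \<in> A" for y A
    by (cases y) auto
  have mem_mirror: "c \<in> mirror n S \<longleftrightarrow> c \<le> 2 * n \<and> 2 * n - c \<in> S" for c
    using S by (auto simp: mirror_def image_iff intro!: bexI[of _ "2 * n - c"])
  have "x \<in> mirror n S \<longleftrightarrow> 2 * n + 1 - x \<in> Suc ` S"
       "x \<in> Suc ` mirror n S \<longleftrightarrow> 2 * n + 1 - x \<in> S" if "x \<le> 2 * n + 1" for x
    using that S unfolding mem_Suc_image mem_mirror by (auto simp: Suc_diff_le)
  then have vcols_iff: "x \<in> vcols n (mirror n S) \<longleftrightarrow> x \<le> 2 * n + 1 \<and> 2 * n + 1 - x \<in> vcols n S" for x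
    by (auto simp: vcols_def)
  show ?thesis
  proof (intro equalityI subsetI)
    fix x assume "x \<in> vcols n (mirror n S)"
    with vcols_iff have "2 * n + 1 - x \<in> vcols n S" "x = 2 * n + 1 - (2 * n + 1 - x)" by auto
    then show "x \<in> (\<lambda>x. 2 * n + 1 - x) ` vcols n S" by (rule rev_image_eqI)
  next
    fix x assume "x \<in> (\<lambda>x. 2 * n + 1 - x) ` vcols n S"
    then obtain z where "z \<in> vcols n S" "x = 2 * n + 1 - z" by blast
    moreover from this have "z \<le> 2 * n + 1" by (simp add: vcols_def)
    ultimately show "x \<in> vcols n (mirror n S)" using vcols_iff by simp
  qed
qed

lemma sigma_matching_of:
  assumes S: "S \<subseteq> {..<2 * n + 1}"
  shows "sigma n (matching_of n S) = matching_of n (mirror n S)"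
proof -
  have "reflect_edge n ` (\<lambda>c. hedge c y) ` S = (\<lambda>c. hedge c y) ` mirror n S" for y
  proof -
    have "reflect_edge n ` (\<lambda>c. hedge c y) ` S = (\<lambda>c. hedge (2 * n - c) y) ` S"
      unfolding image_image using S by (intro image_cong) (auto simp: reflect_hedge)
    then show ?thesis by (simp add: mirror_def image_image)
  qed
  moreover have "reflect_edge n ` vedge ` vcols n S = vedge ` vcols n (mirror n S)"
    unfolding vcols_mirror[OF S] image_image reflect_vedge by simp
  ultimately show ?thesis unfolding sigma_def matching_of_def image_Un by simp
qed

section \<open>Twists and weights\<close>

text \<open>Tile \<open>G\<^sub>i\<close> sits in column \<open>c = i + n\<close>, and its top edge lies in \<open>P_min\<close> exactly for
  even \<open>c\<close>; so the tile is twisted iff \<open>P\<close> contains its top edge precisely when \<open>c\<close> is odd.\<close>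

definition twisted_cols :: "nat \<Rightarrow> edge set \<Rightarrow> nat set" where
  "twisted_cols n P = {c. c < 2 * n + 1 \<and> (c \<in> hcols n P \<longleftrightarrow> odd c)}"

lemma tile_top_eq_hedge: "tile_top n i = hedge (tile_col n i) 1"
  by (simp add: tile_top_def hedge_def)

lemma tile_bot_eq_hedge: "tile_bot n i = hedge (tile_col n i) 0"
  by (simp add: tile_bot_def hedge_def)

lemma tile_col_tiles: "i \<in> tiles n \<Longrightarrow> int (tile_col n i) = i + int n \<and> tile_col n i < 2 * n + 1"
  by (auto simp: tiles_def tile_col_def)

lemma tile_col_inj: "i \<in> tiles n \<Longrightarrow> j \<in> tiles n \<Longrightarrow> tile_col n i = tile_col n j \<Longrightarrow> i = j"
  using tile_col_tiles by (metis add_right_cancel)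

lemma face_weight_tile_col: "i \<in> tiles n \<Longrightarrow> face_weight n i = (if even (tile_col n i) then 1 else 2)"
proof -
  assume i: "i \<in> tiles n"
  have "even (i + int n) = even (int (tile_col n i))" using tile_col_tiles[OF i] by simp
  then show ?thesis by (simp add: face_weight_def)
qed

lemma tile_top_in_P_min_iff: "i \<in> tiles n \<Longrightarrow> tile_top n i \<in> P_min n \<longleftrightarrow> even (tile_col n i)"
proof -
  assume i: "i \<in> tiles n"
  have "tile_top n i \<in> P_min n
      \<longleftrightarrow> (\<exists>j. j \<in> tiles n \<and> face_weight n j = 1 \<and> tile_top n i = tile_top n j)"
    unfolding P_min_def by (auto simp: tile_top_eq_hedge tile_bot_eq_hedge hedge_eq_iff)
  also have "\<dots> \<longleftrightarrow> face_weight n i = 1"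
    using tile_col_inj[OF i] i by (auto simp: tile_top_eq_hedge hedge_eq_iff)
  also have "\<dots> \<longleftrightarrow> even (tile_col n i)" using face_weight_tile_col[OF i] by simp
  finally show ?thesis .
qed

lemma Twist_eq_image: "Twist n P = (\<lambda>c. int c - int n) ` twisted_cols n P"
proof -
  have mem: "i \<in> Twist n P \<longleftrightarrow> i \<in> tiles n \<and> tile_col n i \<in> twisted_cols n P" for i
  proof -
    have "card ({tile_top n i} \<inter> symdiff P (P_min n))
        = of_bool (tile_top n i \<in> symdiff P (P_min n))"
      by auto
    then show ?thesis
      using tile_top_in_P_min_iff[of i n] tile_col_tiles[of i n]
      by (auto simp: Twist_def inside_cycles_def ray_crossed_def symdiff_def twisted_cols_def
          hcols_def tile_top_eq_hedge)
  qed
  show ?thesis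
  proof (intro equalityI subsetI)
    fix i assume "i \<in> Twist n P"
    with mem have "tile_col n i \<in> twisted_cols n P" "i = int (tile_col n i) - int n"
      using tile_col_tiles[of i n] by auto
    then show "i \<in> (\<lambda>c. int c - int n) ` twisted_cols n P" by (rule rev_image_eqI)
  next
    fix i assume "i \<in> (\<lambda>c. int c - int n) ` twisted_cols n P"
    then obtain c where "c \<in> twisted_cols n P" "i = int c - int n" by blast
    moreover have "tile_col n (int c - int n) = c" by (simp add: tile_col_def)
    ultimately show "i \<in> Twist n P" using mem by (auto simp: tiles_def twisted_cols_def)
  qed
qed

lemma face_weight_shift: "face_weight n (int c - int n) = (if even c then 1 else 2)"
  by (simp add: face_weight_def)

lemma card_even_below: "card {c::nat. c < 2 * n + 1 \<and> even c} = n + 1"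
proof -
  have "{c::nat. c < 2 * n + 1 \<and> even c} = (\<lambda>j. 2 * j) ` {..n}"
    by (auto simp: image_iff elim!: evenE)
  moreover have "inj_on (\<lambda>j::nat. 2 * j) {..n}" by (auto simp: inj_on_def)
  ultimately show ?thesis by (simp add: card_image)
qed

lemma ycount_eq_card_twisted_cols:
  "ycount n j P = card {c \<in> twisted_cols n P. face_weight n (int c - int n) = j}"
proof -
  have "{x \<in> f ` U. Q x} = f ` {c \<in> U. Q (f c)}" for f :: "nat \<Rightarrow> int" and U Q by auto
  then show ?thesis
    unfolding ycount_def Twist_eq_image by (simp add: card_image inj_on_def)
qed

lemma ycount_1: "ycount n 1 P = n + 1 - card_even (hcols n P)"
proof -
  have "{c \<in> twisted_cols n P. face_weight n (int c - int n) = 1}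
      = {c. c < 2 * n + 1 \<and> even c} - {c \<in> hcols n P. even c}"
    by (auto simp: twisted_cols_def hcols_def face_weight_shift)
  moreover have "card \<dots> = n + 1 - card_even (hcols n P)"
    using card_even_below[of n] by (subst card_Diff_subset) (auto simp: card_even_def hcols_def)
  ultimately show ?thesis by (simp add: ycount_eq_card_twisted_cols)
qed

lemma ycount_2: "ycount n 2 P = card_odd (hcols n P)"
proof -
  have "{c \<in> twisted_cols n P. face_weight n (int c - int n) = 2} = {c \<in> hcols n P. odd c}"
    by (auto simp: twisted_cols_def hcols_def face_weight_shift)
  then show ?thesis by (simp add: ycount_eq_card_twisted_cols card_odd_def)
qed

lemma card_even_hcols_le: "card_even (hcols n P) \<le> n + 1"
proof -
  have "{c \<in> hcols n P. even c} \<subseteq> {c. c < 2 * n + 1 \<and> even c}" by (auto simp: hcols_def)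
  then have "card_even (hcols n P) \<le> card {c::nat. c < 2 * n + 1 \<and> even c}"
    unfolding card_even_def by (rule card_mono[rotated]) auto
  then show ?thesis using card_even_below[of n] by simp
qed

lemma Match_iff:
  "r \<le> n \<Longrightarrow> P \<in> Match n p r \<longleftrightarrow>
     perfect_matching n P \<and> card_even (hcols n P) = r \<and> card_odd (hcols n P) = p"
  unfolding Match_def Matchings_def
  using ycount_1[of n P] ycount_2[of n P] card_even_hcols_le[of n P]
  by auto

lemma sum_even_cols_centred: "(\<Sum>c | c < 2 * n + 1 \<and> even c. of_nat c - of_nat n :: rat) = 0"
proof -
  have "{c::nat. c < 2 * n + 1 \<and> even c} = (\<lambda>j. 2 * j) ` {0..n}"
    by (auto simp: image_iff elim!: evenE)
  then have "(\<Sum>c | c < 2 * n + 1 \<and> even c. of_nat c - of_nat n :: rat)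
      = (\<Sum>j = 0..n. - of_nat n + of_nat j * 2)"
    by (simp add: sum.reindex inj_on_def algebra_simps)
  also have "\<dots> = 0"
    using double_arith_series[where a = "- of_nat n :: rat" and n = n and d = 2] by simp
  finally show ?thesis .
qed

lemma alpha_eq_sum_hcols:
  "2 * alpha n P = of_nat n * of_nat (card (hcols n P)) - (\<Sum>c\<in>hcols n P. of_nat c)"
proof -
  define g where "g c = (of_nat c - of_nat n :: rat)" for c
  let ?E = "{c::nat. c < 2 * n + 1 \<and> even c}" and ?S = "hcols n P"
  have fin: "finite ?E" "finite ?S" by (auto simp: hcols_def)
  have "2 * alpha n P = (\<Sum>c\<in>twisted_cols n P. 2 * alpha_tile n (int c - int n))"
    unfolding alpha_def Twist_eq_image sum_distrib_left by (simp add: sum.reindex inj_on_def)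
  also have "\<dots> = (\<Sum>c\<in>(?E - ?S) \<union> (?S - ?E). if even c then g c else - g c)"
    by (intro sum.cong) (auto simp: twisted_cols_def hcols_def alpha_tile_def face_weight_def g_def)
  also have "\<dots> = (\<Sum>c\<in>?E - ?S. if even c then g c else - g c)
                   + (\<Sum>c\<in>?S - ?E. if even c then g c else - g c)"
    using fin by (intro sum.union_disjoint) auto
  also have "\<dots> = (\<Sum>c\<in>?E - ?S. g c) + (\<Sum>c\<in>?S - ?E. - g c)"
    by (intro arg_cong2[where f = "(+)"] sum.cong) (auto simp: hcols_def)
  also have "\<dots> = (\<Sum>c\<in>?E - ?S. g c) - (\<Sum>c\<in>?S - ?E. g c)"
    by (simp add: sum_negf)
  also have "\<dots> = (\<Sum>c\<in>?E. g c) - (\<Sum>c\<in>?S. g c)"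
    using sum.Int_Diff[OF fin(1), of g ?S] sum.Int_Diff[OF fin(2), of g ?E]
    by (simp add: Int_commute)
  also have "(\<Sum>c\<in>?E. g c) = 0"
    using sum_even_cols_centred[of n] by (simp add: g_def)
  finally show ?thesis by (simp add: g_def sum_subtractf)
qed

lemma half_sum_mirror:
  assumes "S \<subseteq> {..<2 * n + 1}"
  shows "2 * half_sum (mirror n S) + card_odd S + (\<Sum>c\<in>S. c) = 2 * n * card S"
proof -
  have fin: "finite S" using assms by (rule finite_subset) simp
  have "inj_on (\<lambda>c. 2 * n - c) S" using assms by (intro inj_on_subset[OF inj_on_mirror_map]) auto
  then have "half_sum (mirror n S) = (\<Sum>c\<in>S. (2 * n - c) div 2)"
    by (simp add: half_sum_def mirror_def sum.reindex)
  moreover have "card_odd S = (\<Sum>c\<in>S. of_bool (odd c))"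
    using fin by (simp add: card_odd_def sum.If_cases Int_def)
  moreover have "2 * ((2 * n - c) div 2) + of_bool (odd c) + c = 2 * n" if "c \<in> S" for c
  proof -
    have "c \<le> 2 * n" using that assms by auto
    then show ?thesis by (cases "even c"; simp; presburger)
  qed
  ultimately show ?thesis
    by (simp add: sum_distrib_left sum.distrib[symmetric])
qed

lemma two_choose_two: "2 * (k choose 2) + k = k * k"
  by (induction k) (simp_all add: Suc_choose_two)

text \<open>Doubled, both sides equal \<open>r + 2 n k - k\<^sup>2 - \<Sum>S\<close> for \<open>S = hcols n P\<close> and \<open>k = p + r\<close>.\<close>

lemma wt_eq_half_sum_mirror:
  assumes "p + r \<le> n" and P: "P \<in> Match n p r"
  shows "wt n p r P = of_nat (half_sum (mirror n (hcols n P)) - (p + r choose 2))"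
proof -
  let ?S = "hcols n P"
  have S: "?S \<in> indep_sets (2 * n + 1) r p"
    using P Match_iff[of r n P p] assms(1) hcols_subset indep_hcols by (auto simp: indep_sets_def)
  have card: "card ?S = p + r"
    using S card_eq_card_even_plus_odd[OF indep_sets_finite[OF S]] by (simp add: indep_sets_def)
  have "card (mirror n ?S) = p + r"
    using mirror_indep_sets[OF S] card_eq_card_even_plus_odd indep_sets_finite
    by (auto simp: indep_sets_def)
  then have le: "p + r choose 2 \<le> half_sum (mirror n ?S)"
    using indep_card_bounds(2)[of "mirror n ?S" "2 * n + 1"] mirror_indep_sets[OF S]
    by (simp add: indep_sets_def)
  have "2 * half_sum (mirror n ?S) + p + (\<Sum>c\<in>?S. c) = 2 * n * (p + r)"
    using half_sum_mirror[OF hcols_subset[of n P]] card S by (simp add: indep_sets_def)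
  from arg_cong[OF this, of "of_nat :: nat \<Rightarrow> rat"]
  have "2 * (of_nat (half_sum (mirror n ?S)) :: rat) + of_nat p + (\<Sum>c\<in>?S. of_nat c)
      = 2 * of_nat n * (of_nat p + of_nat r)"
    by simp
  moreover from arg_cong[OF two_choose_two[of "p + r"], of "of_nat :: nat \<Rightarrow> rat"]
  have "2 * (of_nat (p + r choose 2) :: rat) + (of_nat p + of_nat r)
      = (of_nat p + of_nat r) * (of_nat p + of_nat r)"
    by simp
  moreover have "2 * alpha n P = of_nat n * (of_nat p + of_nat r) - (\<Sum>c\<in>?S. of_nat c)"
    using alpha_eq_sum_hcols[of n P] card by simp
  moreover have "(of_nat (n - r - p) :: rat) = of_nat n - of_nat r - of_nat p"
    using assms(1) by simp
  ultimately show ?thesis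
    unfolding wt_def of_nat_diff[OF le] by (simp add: field_simps)
qed

lemma bij_betw_mirror_indep_sets:
  "bij_betw (mirror n) (indep_sets (2 * n + 1) e d) (indep_sets (2 * n + 1) e d)"
proof -
  have "mirror n (mirror n S) = S" if "S \<in> indep_sets (2 * n + 1) e d" for S
    using that by (intro mirror_mirror) (auto simp: indep_sets_def)
  then show ?thesis
    by (intro bij_betw_byWitness[where f' = "mirror n"]) (use mirror_indep_sets in blast)+
qed

lemma bij_betw_hcols_Match:
  assumes "r \<le> n"
  shows "bij_betw (hcols n) (Match n p r) (indep_sets (2 * n + 1) r p)"
proof (rule bij_betw_byWitness[where f' = "matching_of n"])
  show "\<forall>P\<in>Match n p r. matching_of n (hcols n P) = P"
    using Match_iff[OF assms] matching_of_hcols by metis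
  show "\<forall>S\<in>indep_sets (2 * n + 1) r p. hcols n (matching_of n S) = S"
    using hcols_matching_of unfolding indep_sets_def by blast
  show "hcols n ` Match n p r \<subseteq> indep_sets (2 * n + 1) r p"
  proof (rule image_subsetI)
    fix P assume "P \<in> Match n p r"
    then show "hcols n P \<in> indep_sets (2 * n + 1) r p"
      using Match_iff[OF assms] indep_hcols hcols_subset[of n P] by (simp add: indep_sets_def)
  qed
  show "matching_of n ` indep_sets (2 * n + 1) r p \<subseteq> Match n p r"
    using Match_iff[OF assms] perfect_matching_of hcols_matching_of
    by (auto simp: indep_sets_def)
qed

lemma sigma_eq_iff:
  assumes "perfect_matching n P"
  shows "sigma n P = P \<longleftrightarrow> mirror n (hcols n P) = hcols n P"
proof -
  have S: "hcols n P \<subseteq> {..<2 * n + 1}" "mirror n (hcols n P) \<subseteq> {..<2 * n + 1}"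
    by (auto simp: hcols_def mirror_def)
  have "sigma n P = matching_of n (mirror n (hcols n P))"
    using sigma_matching_of[OF S(1)] matching_of_hcols[OF assms] by simp
  then show ?thesis
    using matching_of_hcols[OF assms] hcols_matching_of[OF S(1)] hcols_matching_of[OF S(2)] by metis
qed

theorem mainTheorem12:
  fixes n p r :: nat
  assumes "p + r \<le> n"
  defines "X \<equiv> qbinom (n - r) p * qbinom (n + 1 - p) r"
  shows "(\<forall>P\<in>Match n p r. \<exists>m::nat. wt n p r P = of_nat m)
       \<and> X = (\<Sum>P\<in>Match n p r. monom 1 (nat \<lfloor>wt n p r P\<rfloor>))
       \<and> poly X (-1) = int (card {P \<in> Match n p r. sigma n P = P})"
proof (intro conjI)
  let ?w = "\<lambda>S. half_sum S - (p + r choose 2)"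
  have bij: "bij_betw (hcols n) (Match n p r) (indep_sets (2 * n + 1) r p)"
    using assms(1) by (intro bij_betw_hcols_Match) simp
  have wt: "wt n p r P = of_nat (?w (mirror n (hcols n P)))" if "P \<in> Match n p r" for P
    using wt_eq_half_sum_mirror[OF assms(1) that] .
  then show "\<forall>P\<in>Match n p r. \<exists>m::nat. wt n p r P = of_nat m" by blast
  have "(\<Sum>P\<in>Match n p r. monom 1 (nat \<lfloor>wt n p r P\<rfloor>))
      = (\<Sum>P\<in>Match n p r. monom 1 (?w (mirror n (hcols n P))))"
    by (intro sum.cong) (simp_all add: wt)
  also have "\<dots> = (\<Sum>S\<in>indep_sets (2 * n + 1) r p. monom 1 (?w (mirror n S)))"
    using sum.reindex_bij_betw[OF bij, of "\<lambda>S. monom 1 (?w (mirror n S))"] .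
  also have "\<dots> = (\<Sum>S\<in>indep_sets (2 * n + 1) r p. monom 1 (?w S))"
    using sum.reindex_bij_betw[OF bij_betw_mirror_indep_sets, of "\<lambda>S. monom 1 (?w S)"] .
  also have "\<dots> = X"
    unfolding X_def by (rule sum_indep_sets_shifted_monom[OF assms(1)])
  finally show "X = (\<Sum>P\<in>Match n p r. monom 1 (nat \<lfloor>wt n p r P\<rfloor>))" ..
  have "bij_betw (hcols n) {P \<in> Match n p r. sigma n P = P}
      {S \<in> indep_sets (2 * n + 1) r p. mirror n S = S}"
    by (rule bij_betw_Collect[OF bij]) (simp add: sigma_eq_iff Match_def Matchings_def)
  then show "poly X (-1) = int (card {P \<in> Match n p r. sigma n P = P})"
    unfolding X_def poly_qbinom_product_minus_one[OF assms(1)] by (simp add: bij_betw_same_card)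
qed

end
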